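(* If $\Gamma=(S,A)$ is a connected skew-symmetric graph which has the Kahan-Poisson property, then there exists $\gamma\in\mathbb F^*$ such that every non-zero entry $a_{i,j}$ of $A$ belongs to $\{\gamma,-\gamma\}$.
   Context: $\mathbb F\in\{\mathbb R,\mathbb C\}$. A skew-symmetric graph is $\Gamma=(S,A)$, $A=(a_{i,j})$ skew-symmetric over $\mathbb F$, with an arc between $i$ and $j$ iff $a_{i,j}\ne0$; connected means the underlying undirected graph is connected. Its Poisson bracket on $\mathbb F(x)$ is $\{x_i,x_j\}=a_{i,j}x_ix_j$; its Kahan morphism is $K(x_i)=\tilde x_i$ with $\tilde x_i$ the unique solution of $\tilde x_i-x_i=\tilde x_i\sum_ja_{i,j}x_j+x_i\sum_ja_{i,j}\tilde x_j$; $\Gamma$ has the Kahan-Poisson property if $\{\tilde x_i,\tilde x_j\}=a_{i,j}\tilde x_i\tilde x_j$ for all $i,j$. *)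

theory Defs
  imports "HOL-Analysis.Analysis"
begin

text \<open>Vertices: a finite type 'n (the set S = UNIV). Weights A :: 'n => 'n => 'a.\<close>

definition skew_symmetric :: "('n \<Rightarrow> 'n \<Rightarrow> 'a::ab_group_add) \<Rightarrow> bool" where
  "skew_symmetric A \<longleftrightarrow> (\<forall>i j. A i j = - A j i)"

definition arcs :: "('n \<Rightarrow> 'n \<Rightarrow> 'a::zero) \<Rightarrow> ('n \<times> 'n) set" where
  "arcs A = {(i, j). A i j \<noteq> 0}"

definition connected_graph :: "('n \<Rightarrow> 'n \<Rightarrow> 'a::zero) \<Rightarrow> bool" where
  "connected_graph A \<longleftrightarrow> (\<forall>i j. (i, j) \<in> (arcs A \<union> (arcs A)\<inverse>)\<^sup>*)"

text \<open>The defining linear equations of the Kahan morphism at the point x, with unknown y = x tilde.\<close>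
definition kahan_eqs :: "('n::finite \<Rightarrow> 'n \<Rightarrow> 'a::field) \<Rightarrow> ('n \<Rightarrow> 'a) \<Rightarrow> ('n \<Rightarrow> 'a) \<Rightarrow> bool" where
  "kahan_eqs A x y \<longleftrightarrow>
     (\<forall>i. y i - x i = y i * (\<Sum>j\<in>UNIV. A i j * x j) + x i * (\<Sum>j\<in>UNIV. A i j * y j))"

text \<open>Points where the Kahan system has a unique solution (the domain of the rational map K).\<close>
definition kahan_defined :: "('n::finite \<Rightarrow> 'n \<Rightarrow> 'a::field) \<Rightarrow> ('n \<Rightarrow> 'a) \<Rightarrow> bool" where
  "kahan_defined A x \<longleftrightarrow> (\<exists>!y. kahan_eqs A x y)"

definition kahan :: "('n::finite \<Rightarrow> 'n \<Rightarrow> 'a::field) \<Rightarrow> ('n \<Rightarrow> 'a) \<Rightarrow> ('n \<Rightarrow> 'a)" where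
  "kahan A x = (THE y. kahan_eqs A x y)"

definition partial_deriv :: "(('n \<Rightarrow> 'a) \<Rightarrow> 'a::real_normed_field) \<Rightarrow> 'n \<Rightarrow> ('n \<Rightarrow> 'a) \<Rightarrow> 'a" where
  "partial_deriv f k x = deriv (\<lambda>t. f (x(k := t))) (x k)"

definition poisson_bracket :: "('n::finite \<Rightarrow> 'n \<Rightarrow> 'a::real_normed_field) \<Rightarrow>
    (('n \<Rightarrow> 'a) \<Rightarrow> 'a) \<Rightarrow> (('n \<Rightarrow> 'a) \<Rightarrow> 'a) \<Rightarrow> ('n \<Rightarrow> 'a) \<Rightarrow> 'a" where
  "poisson_bracket A f g x =
     (\<Sum>k\<in>UNIV. \<Sum>l\<in>UNIV. A k l * x k * x l * partial_deriv f k x * partial_deriv g l x)"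

text \<open>Kahan-Poisson property: the identity of rational functions, checked pointwise on the
  (nonempty, Zariski-open) domain of definition of the Kahan map.\<close>
definition kahan_poisson :: "('n::finite \<Rightarrow> 'n \<Rightarrow> 'a::real_normed_field) \<Rightarrow> bool" where
  "kahan_poisson A \<longleftrightarrow>
     (\<forall>x. kahan_defined A x \<longrightarrow>
        (\<forall>i j. poisson_bracket A (\<lambda>z. kahan A z i) (\<lambda>z. kahan A z j) x
               = A i j * kahan A x i * kahan A x j))"

end

theory Submission
  imports Defs
begin

text \<open>
  The Kahan equations \<open>y - x = y \<circ> A x + x \<circ> A y\<close> read \<open>M(x) y = x\<close> with
  \<open>M(x) = I - diag(A x) - diag(x) A\<close>, and differentiating them gives \<open>M(x) J = R(y)\<close> with
  \<open>R(y) = I + diag(A y) + diag(y) A\<close>, where \<open>J\<close> is the Jacobian of the Kahan map \<open>K\<close> and \<open>y = K x\<close>.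
  The Kahan-Poisson property says \<open>J P(x) J\<^sup>T = P(y)\<close> for the Poisson tensor
  \<open>P(x)\<^sub>a\<^sub>b = a\<^sub>a\<^sub>b x\<^sub>a x\<^sub>b\<close>; combining the two eliminates \<open>J\<close>:
  \<open>R(y) P(x) R(y)\<^sup>T = M(x) P(y) M(x)\<^sup>T\<close> on the domain of \<open>K\<close>.

  Writing \<open>y = x \<circ> \<rho>\<close>, the difference of the \<open>(p, q)\<close> entries of the two sides is \<open>x\<^sub>p x\<^sub>q\<close>
  times a rational function of \<open>x\<close> (the defect), which therefore vanishes wherever \<open>x\<^sub>p x\<^sub>q \<noteq> 0\<close>, and by continuity
  also in the limit \<open>x\<^sub>p, x\<^sub>q \<rightarrow> 0\<close>. Restrict to points supported on three vertices \<open>i, j, k\<close>, where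
  \<open>K\<close> is explicit by Cramer's rule, and take \<open>(p, q) = (j, k)\<close> at the point \<open>t e\<^sub>i\<close>: there the defect
  equals \<open>2 a\<^sub>i\<^sub>j a\<^sub>i\<^sub>k (a\<^sub>i\<^sub>k\<^sup>2 - a\<^sub>i\<^sub>j\<^sup>2) t\<^sup>3 / ((1 + a\<^sub>i\<^sub>j t) (1 + a\<^sub>i\<^sub>k t))\<close>.
  Hence any two arcs at a common vertex have weights of equal square, and connectedness spreads
  this over the whole graph.
\<close>

definition det3 :: "('n \<Rightarrow> 'n \<Rightarrow> 'a::comm_ring_1) \<Rightarrow> 'n \<Rightarrow> 'n \<Rightarrow> 'n \<Rightarrow> 'a" where
  "det3 N i j k = N i i * (N j j * N k k - N j k * N k j) - N i j * (N j i * N k k - N j k * N k i)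
     + N i k * (N j i * N k j - N j j * N k i)"

lemma cramer3:
  fixes N :: "'n \<Rightarrow> 'n \<Rightarrow> 'a::field"
  assumes distinct: "distinct [i, j, k]" and det: "det3 N i j k \<noteq> 0"
  shows "(\<forall>p\<in>{i, j, k}. N p i * r i + N p j * r j + N p k * r k = e p)
     \<longleftrightarrow> (\<forall>l\<in>{i, j, k}. r l = det3 (\<lambda>p m. if m = l then e p else N p m) i j k / det3 N i j k)"
    (is "?system \<longleftrightarrow> ?formula")
proof -
  let ?C = "\<lambda>l. det3 (\<lambda>p m. if m = l then e p else N p m) i j k"
  have formula_iff: "?formula \<longleftrightarrow> (\<forall>l\<in>{i, j, k}. det3 N i j k * r l = ?C l)"
    using det by (auto simp: field_simps)
  have solution: "det3 N i j k * r l = ?C l" if ?system "l \<in> {i, j, k}" for l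
  proof -
    from that(1) have "e i = N i i * r i + N i j * r j + N i k * r k"
      "e j = N j i * r i + N j j * r j + N j k * r k" "e k = N k i * r i + N k j * r j + N k k * r k"
      by auto
    with that(2) distinct show ?thesis unfolding det3_def by (auto simp: algebra_simps)
  qed
  have equation: "N p i * r i + N p j * r j + N p k * r k = e p"
    if "\<forall>l\<in>{i, j, k}. det3 N i j k * r l = ?C l" "p \<in> {i, j, k}" for p
  proof -
    have "det3 N i j k * (N p i * r i + N p j * r j + N p k * r k)
        = N p i * ?C i + N p j * ?C j + N p k * ?C k"
      using that(1) by (simp add: distrib_left mult.left_commute[of "det3 N i j k"])
    also have "\<dots> = det3 N i j k * e p"
      using that(2) distinct unfolding det3_def by (auto simp: algebra_simps)
    finally show ?thesis
      using det by simp
  qed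
  show ?thesis
    unfolding formula_iff using solution equation by blast
qed

lemma sum_if_eq_times:
  fixes f :: "'n::finite \<Rightarrow> 'a::comm_ring_1"
  shows "(\<Sum>l\<in>UNIV. (if p = l then c else 0) * f l) = c * f p"
  by (simp add: if_distrib[of "\<lambda>u. u * _"] cong: if_cong)

section \<open>Kahan matrices and the congruence identity\<close>

text \<open>\<open>kahan_N A x\<close> is \<open>kahan_M A x\<close> conjugated by \<open>diag(x)\<close>: it is the matrix of the Kahan
  equations for the ratios \<open>\<rho> = y / x\<close>.\<close>

definition kahan_M :: "('n::finite \<Rightarrow> 'n \<Rightarrow> 'a::field) \<Rightarrow> ('n \<Rightarrow> 'a) \<Rightarrow> 'n \<Rightarrow> 'n \<Rightarrow> 'a" where
  "kahan_M A x p l = (if p = l then 1 - (\<Sum>m\<in>UNIV. A p m * x m) else 0) - x p * A p l"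

definition kahan_R :: "('n::finite \<Rightarrow> 'n \<Rightarrow> 'a::field) \<Rightarrow> ('n \<Rightarrow> 'a) \<Rightarrow> 'n \<Rightarrow> 'n \<Rightarrow> 'a" where
  "kahan_R A y p l = (if p = l then 1 + (\<Sum>m\<in>UNIV. A p m * y m) else 0) + y p * A p l"

definition kahan_N :: "('n::finite \<Rightarrow> 'n \<Rightarrow> 'a::field) \<Rightarrow> ('n \<Rightarrow> 'a) \<Rightarrow> 'n \<Rightarrow> 'n \<Rightarrow> 'a" where
  "kahan_N A x p l = (if p = l then 1 - (\<Sum>m\<in>UNIV. A p m * x m) else 0) - A p l * x l"

lemma sum_kahan_M:
  "(\<Sum>l\<in>UNIV. kahan_M A x p l * v l)
    = (1 - (\<Sum>m\<in>UNIV. A p m * x m)) * v p - x p * (\<Sum>m\<in>UNIV. A p m * v m)"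
  by (simp add: kahan_M_def left_diff_distrib sum_subtractf sum_distrib_left mult.assoc sum_if_eq_times)

lemma sum_kahan_N:
  "(\<Sum>l\<in>UNIV. kahan_N A x p l * v l)
    = (1 - (\<Sum>m\<in>UNIV. A p m * x m)) * v p - (\<Sum>m\<in>UNIV. A p m * (x m * v m))"
  by (simp add: kahan_N_def left_diff_distrib sum_subtractf mult.assoc sum_if_eq_times)

lemma kahan_eqs_kahan:
  assumes "kahan_defined A x"
  shows "kahan_eqs A x (kahan A x)"
  using assms unfolding kahan_defined_def kahan_def by (rule theI')

lemma kahan_eqs_imp_zero:
  assumes "kahan_eqs A x y" and "x m = 0" and "(\<Sum>l\<in>UNIV. A m l * x l) \<noteq> 1"
  shows "y m = 0"
proof -
  have "y m - x m = y m * (\<Sum>l\<in>UNIV. A m l * x l) + x m * (\<Sum>l\<in>UNIV. A m l * y l)"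
    using assms(1) unfolding kahan_eqs_def by blast
  then have "y m * (1 - (\<Sum>l\<in>UNIV. A m l * x l)) = 0"
    using assms(2) by (simp add: algebra_simps)
  with assms(3) show ?thesis by simp
qed

lemma kahan_eqs_scaled_iff:
  "kahan_eqs A x (\<lambda>l. x l * \<rho> l) \<longleftrightarrow> (\<forall>p. x p \<noteq> 0 \<longrightarrow> (\<Sum>l\<in>UNIV. kahan_N A x p l * \<rho> l) = 1)"
proof -
  have "(x p * \<rho> p - x p = x p * \<rho> p * (\<Sum>m\<in>UNIV. A p m * x m) + x p * (\<Sum>l\<in>UNIV. A p l * (x l * \<rho> l)))
      \<longleftrightarrow> x p * ((\<Sum>l\<in>UNIV. kahan_N A x p l * \<rho> l) - 1) = 0" for p
    unfolding sum_kahan_N by (simp add: algebra_simps eq_iff_diff_eq_0[of "x p * \<rho> p"])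
  then show ?thesis
    unfolding kahan_eqs_def by simp blast
qed

lemma has_field_derivative_fun_upd_component:
  "((\<lambda>t. (x(q := t)) l) has_field_derivative (if l = q then 1 else 0)) (at t0)"
  by (cases "l = q") (auto intro: derivative_eq_intros)

lemma has_field_derivative_kahan_residual:
  fixes A :: "'n::finite \<Rightarrow> 'n \<Rightarrow> 'a::real_normed_field"
  assumes "\<And>l. ((\<lambda>t. y t l) has_field_derivative J l) (at (x q))"
  shows "((\<lambda>t. y t p - (x(q := t)) p - y t p * (\<Sum>m\<in>UNIV. A p m * (x(q := t)) m)
      - (x(q := t)) p * (\<Sum>m\<in>UNIV. A p m * y t m))
    has_field_derivative (\<Sum>l\<in>UNIV. kahan_M A x p l * J l) - kahan_R A (y (x q)) p q) (at (x q))"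
  by (rule derivative_eq_intros assms has_field_derivative_fun_upd_component refl)+
    (unfold sum_kahan_M kahan_R_def, cases "p = q";
      simp add: if_distrib if_distribR algebra_simps sum_distrib_left cong: if_cong)

lemma kahan_M_jacobian:
  fixes A :: "'n::finite \<Rightarrow> 'n \<Rightarrow> 'a::real_normed_field"
  assumes defined: "\<forall>\<^sub>F t in nhds (x q). kahan_defined A (x(q := t))"
    and diff: "\<And>l. (\<lambda>t. kahan A (x(q := t)) l) field_differentiable at (x q)"
  shows "(\<Sum>l\<in>UNIV. kahan_M A x p l * partial_deriv (\<lambda>z. kahan A z l) q x)
         = kahan_R A (kahan A x) p q"
proof -
  define y where "y t = kahan A (x(q := t))" for t
  define J where "J l = partial_deriv (\<lambda>z. kahan A z l) q x" for l
  define e where "e t = y t p - (x(q := t)) p - y t p * (\<Sum>m\<in>UNIV. A p m * (x(q := t)) m)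
      - (x(q := t)) p * (\<Sum>m\<in>UNIV. A p m * y t m)" for t
  have "((\<lambda>t. y t l) has_field_derivative J l) (at (x q))" for l
    using diff[of l] unfolding y_def J_def partial_deriv_def
    by (simp add: DERIV_deriv_iff_field_differentiable[symmetric])
  then have "(e has_field_derivative (\<Sum>l\<in>UNIV. kahan_M A x p l * J l) - kahan_R A (kahan A x) p q)
      (at (x q))"
    unfolding e_def using has_field_derivative_kahan_residual[of y J x q] by (simp add: y_def)
  moreover have "\<forall>\<^sub>F t in nhds (x q). e t = 0"
    using defined
  proof (rule eventually_mono)
    fix t assume "kahan_defined A (x(q := t))"
    then have "kahan_eqs A (x(q := t)) (y t)" by (simp add: y_def kahan_eqs_kahan)
    then have "y t p - (x(q := t)) p = y t p * (\<Sum>m\<in>UNIV. A p m * (x(q := t)) m)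
        + (x(q := t)) p * (\<Sum>m\<in>UNIV. A p m * y t m)"
      unfolding kahan_eqs_def by blast
    then show "e t = 0" unfolding e_def by (simp add: algebra_simps del: fun_upd_apply)
  qed
  then have "(e has_field_derivative 0) (at (x q))"
    by (simp add: DERIV_cong_ev[OF refl _ refl, of e "\<lambda>_. 0"] eventually_mono)
  ultimately have "(\<Sum>l\<in>UNIV. kahan_M A x p l * J l) - kahan_R A (kahan A x) p q = 0"
    by (rule DERIV_unique)
  then show ?thesis
    unfolding J_def by simp
qed

lemma sum_congruence:
  fixes M J R P :: "'n::finite \<Rightarrow> 'n \<Rightarrow> 'a::comm_semiring_1"
  assumes R: "\<And>p a. a \<in> S \<Longrightarrow> R p a = (\<Sum>c\<in>UNIV. M p c * J c a)"
    and P: "\<And>a b. P a b \<noteq> 0 \<Longrightarrow> a \<in> S \<and> b \<in> S"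
  shows "(\<Sum>a\<in>UNIV. \<Sum>b\<in>UNIV. R p a * P a b * R q b)
       = (\<Sum>c\<in>UNIV. \<Sum>d\<in>UNIV. M p c * (\<Sum>a\<in>UNIV. \<Sum>b\<in>UNIV. J c a * P a b * J d b) * M q d)"
proof -
  have "R p a * P a b * R q b = (\<Sum>c\<in>UNIV. M p c * J c a) * P a b * (\<Sum>d\<in>UNIV. M q d * J d b)" for a b
    using P[of a b] by (cases "P a b = 0") (simp_all add: R)
  then have "(\<Sum>a\<in>UNIV. \<Sum>b\<in>UNIV. R p a * P a b * R q b)
      = (\<Sum>a\<in>UNIV. \<Sum>b\<in>UNIV. \<Sum>c\<in>UNIV. \<Sum>d\<in>UNIV. M p c * (J c a * P a b * J d b) * M q d)"
    by (simp add: sum_distrib_left sum_distrib_right mult_ac)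
  also have "\<dots> = (\<Sum>c\<in>UNIV. \<Sum>a\<in>UNIV. \<Sum>b\<in>UNIV. \<Sum>d\<in>UNIV. M p c * (J c a * P a b * J d b) * M q d)"
    by (subst sum.swap) (rule sum.cong[OF refl], rule sum.swap)
  also have "\<dots> = (\<Sum>c\<in>UNIV. \<Sum>d\<in>UNIV. \<Sum>a\<in>UNIV. \<Sum>b\<in>UNIV. M p c * (J c a * P a b * J d b) * M q d)"
    by (rule sum.cong[OF refl], subst sum.swap) (rule sum.cong[OF refl], rule sum.swap)
  finally show ?thesis
    by (simp add: sum_distrib_left sum_distrib_right)
qed

lemma kahan_poisson_congruence:
  fixes A :: "'n::finite \<Rightarrow> 'n \<Rightarrow> 'a::real_normed_field"
  assumes KP: "kahan_poisson A" and defined: "kahan_defined A x"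
    and defined_nearby: "\<And>q. x q \<noteq> 0 \<Longrightarrow> \<forall>\<^sub>F t in nhds (x q). kahan_defined A (x(q := t))"
    and diff: "\<And>q l. x q \<noteq> 0 \<Longrightarrow> (\<lambda>t. kahan A (x(q := t)) l) field_differentiable at (x q)"
  shows "(\<Sum>a\<in>UNIV. \<Sum>b\<in>UNIV. kahan_R A (kahan A x) p a * (A a b * x a * x b) * kahan_R A (kahan A x) q b)
       = (\<Sum>c\<in>UNIV. \<Sum>d\<in>UNIV. kahan_M A x p c * (A c d * kahan A x c * kahan A x d) * kahan_M A x q d)"
proof -
  define J where "J c a = partial_deriv (\<lambda>z. kahan A z c) a x" for c a
  have "A c d * kahan A x c * kahan A x d
      = (\<Sum>a\<in>UNIV. \<Sum>b\<in>UNIV. J c a * (A a b * x a * x b) * J d b)" for c d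
    using KP defined unfolding kahan_poisson_def poisson_bracket_def J_def
    by (simp add: mult_ac)
  moreover have "(\<Sum>a\<in>UNIV. \<Sum>b\<in>UNIV.
        kahan_R A (kahan A x) p a * (A a b * x a * x b) * kahan_R A (kahan A x) q b)
      = (\<Sum>c\<in>UNIV. \<Sum>d\<in>UNIV.
        kahan_M A x p c * (\<Sum>a\<in>UNIV. \<Sum>b\<in>UNIV. J c a * (A a b * x a * x b) * J d b) * kahan_M A x q d)"
    by (rule sum_congruence[where S = "{a. x a \<noteq> 0}"])
      (auto simp: J_def kahan_M_jacobian defined_nearby diff)
  ultimately show ?thesis
    by simp
qed

definition kahan_R_scaled ::
    "('n::finite \<Rightarrow> 'n \<Rightarrow> 'a::field) \<Rightarrow> ('n \<Rightarrow> 'a) \<Rightarrow> ('n \<Rightarrow> 'a) \<Rightarrow> 'n \<Rightarrow> 'n \<Rightarrow> 'a" where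
  "kahan_R_scaled A x \<rho> p l =
     (if p = l then 1 + (\<Sum>m\<in>UNIV. A p m * (x m * \<rho> m)) else 0) + \<rho> p * A p l * x l"

definition kahan_defect ::
    "('n::finite \<Rightarrow> 'n \<Rightarrow> 'a::field) \<Rightarrow> ('n \<Rightarrow> 'a) \<Rightarrow> ('n \<Rightarrow> 'a) \<Rightarrow> 'n \<Rightarrow> 'n \<Rightarrow> 'a" where
  "kahan_defect A x \<rho> p q =
     (\<Sum>a\<in>UNIV. \<Sum>b\<in>UNIV. kahan_R_scaled A x \<rho> p a * A a b * kahan_R_scaled A x \<rho> q b)
   - (\<Sum>c\<in>UNIV. \<Sum>d\<in>UNIV. (kahan_N A x p c * \<rho> c) * A c d * (kahan_N A x q d * \<rho> d))"

lemma kahan_congruence_scaled: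
  "(\<Sum>a\<in>UNIV. \<Sum>b\<in>UNIV.
      kahan_R A (\<lambda>l. x l * \<rho> l) p a * (A a b * x a * x b) * kahan_R A (\<lambda>l. x l * \<rho> l) q b)
   - (\<Sum>c\<in>UNIV. \<Sum>d\<in>UNIV. kahan_M A x p c * (A c d * (x c * \<rho> c) * (x d * \<rho> d)) * kahan_M A x q d)
   = x p * x q * kahan_defect A x \<rho> p q"
proof -
  have R: "kahan_R A (\<lambda>l. x l * \<rho> l) p a * x a = x p * kahan_R_scaled A x \<rho> p a" for p a
    by (simp add: kahan_R_def kahan_R_scaled_def algebra_simps)
  have M: "kahan_M A x p c * (x c * \<rho> c) = x p * (kahan_N A x p c * \<rho> c)" for p c
    by (simp add: kahan_M_def kahan_N_def algebra_simps)
  have RPR: "kahan_R A (\<lambda>l. x l * \<rho> l) p a * (A a b * x a * x b) * kahan_R A (\<lambda>l. x l * \<rho> l) q b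
      = x p * x q * (kahan_R_scaled A x \<rho> p a * A a b * kahan_R_scaled A x \<rho> q b)" for a b
  proof -
    have "kahan_R A (\<lambda>l. x l * \<rho> l) p a * (A a b * x a * x b) * kahan_R A (\<lambda>l. x l * \<rho> l) q b
        = (kahan_R A (\<lambda>l. x l * \<rho> l) p a * x a) * A a b * (kahan_R A (\<lambda>l. x l * \<rho> l) q b * x b)"
      by (simp only: mult_ac)
    then show ?thesis unfolding R by (simp only: mult_ac)
  qed
  have MQM: "kahan_M A x p c * (A c d * (x c * \<rho> c) * (x d * \<rho> d)) * kahan_M A x q d
      = x p * x q * ((kahan_N A x p c * \<rho> c) * A c d * (kahan_N A x q d * \<rho> d))" for c d
  proof -
    have "kahan_M A x p c * (A c d * (x c * \<rho> c) * (x d * \<rho> d)) * kahan_M A x q d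
        = (kahan_M A x p c * (x c * \<rho> c)) * A c d * (kahan_M A x q d * (x d * \<rho> d))"
      by (simp only: mult_ac)
    then show ?thesis unfolding M by (simp only: mult_ac)
  qed
  show ?thesis
    unfolding kahan_defect_def right_diff_distrib sum_distrib_left RPR MQM ..
qed

lemma field_differentiable_fun_upd_component:
  "(\<lambda>t. (x(q := t)) l) field_differentiable at t0"
  unfolding field_differentiable_def by (rule exI, rule has_field_derivative_fun_upd_component)

lemma field_differentiable_eventually_eq:
  assumes "\<forall>\<^sub>F t in nhds a. f t = g t" and "f field_differentiable at a"
  shows "g field_differentiable at a"
  using assms DERIV_cong_ev[OF refl assms(1) refl] unfolding field_differentiable_def by blast

lemma isCont_eventually_nhds_neq:
  fixes f :: "'a::t2_space \<Rightarrow> 'b::t2_space"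
  assumes "isCont f a" and "f a \<noteq> c"
  shows "\<forall>\<^sub>F t in nhds a. f t \<noteq> c"
  unfolding eventually_nhds_conv_at
  using tendsto_imp_eventually_ne[OF assms(1)[unfolded isCont_def] assms(2)] assms(2) by blast

lemma field_differentiable_kahan_N:
  assumes "\<And>m. (\<lambda>s. X s m) field_differentiable at s0"
  shows "(\<lambda>s. kahan_N A (X s) p l) field_differentiable at s0"
  unfolding kahan_N_def by (cases "p = l") (simp_all, (intro derivative_intros assms)+)

lemma field_differentiable_det3:
  assumes "\<And>p m. (\<lambda>s. N s p m) field_differentiable at s0"
  shows "(\<lambda>s. det3 (N s) i j k) field_differentiable at s0"
  unfolding det3_def by (intro derivative_intros assms)

lemma field_differentiable_kahan_defect:
  assumes "\<And>m. (\<lambda>s. X s m) field_differentiable at s0"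
    and "\<And>m. (\<lambda>s. \<rho> s m) field_differentiable at s0"
  shows "(\<lambda>s. kahan_defect A (X s) (\<rho> s) p q) field_differentiable at s0"
proof -
  have "(\<lambda>s. kahan_R_scaled A (X s) (\<rho> s) p' a) field_differentiable at s0" for p' a
    unfolding kahan_R_scaled_def by (cases "p' = a") (simp_all, (intro derivative_intros assms)+)
  then show ?thesis
    unfolding kahan_defect_def by (intro derivative_intros field_differentiable_kahan_N assms)
qed

section \<open>Three vertices\<close>

lemma skew_symmetric_diag:
  fixes A :: "'n \<Rightarrow> 'n \<Rightarrow> 'a::real_normed_field"
  assumes "skew_symmetric A"
  shows "A p p = 0"
proof -
  have "A p p = - A p p"
    using assms unfolding skew_symmetric_def by blast
  then show ?thesis by simp
qed

lemma skew_symmetric_swap: "skew_symmetric A \<Longrightarrow> A q p = - A p q"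
  unfolding skew_symmetric_def by blast

locale kahan_triangle =
  fixes A :: "'n::finite \<Rightarrow> 'n \<Rightarrow> 'a::real_normed_field" and i j k :: 'n
  assumes skew: "skew_symmetric A" and distinct: "distinct [i, j, k]"
begin

lemma distinct_vertices: "i \<noteq> j" "i \<noteq> k" "j \<noteq> k" "j \<noteq> i" "k \<noteq> i" "k \<noteq> j"
  using distinct by auto

lemma sum_triangle:
  assumes "\<And>l. l \<notin> {i, j, k} \<Longrightarrow> f l = 0"
  shows "(\<Sum>l\<in>UNIV. f l) = f i + f j + f k"
proof -
  have "(\<Sum>l\<in>UNIV. f l) = (\<Sum>l\<in>{i, j, k}. f l)"
    by (rule sum.mono_neutral_right) (use assms in auto)
  also have "\<dots> = f i + f j + f k"
    using distinct by (simp add: add.assoc)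
  finally show ?thesis .
qed

lemma double_sum_triangle:
  assumes "\<And>a b. a \<notin> {i, j, k} \<or> b \<notin> {i, j, k} \<Longrightarrow> f a b = 0"
  shows "(\<Sum>a\<in>UNIV. \<Sum>b\<in>UNIV. f a b) = (\<Sum>a\<in>{i, j, k}. \<Sum>b\<in>{i, j, k}. f a b)"
proof -
  have "(\<Sum>b\<in>UNIV. f a b) = (\<Sum>b\<in>{i, j, k}. f a b)" for a
    by (rule sum.mono_neutral_right) (use assms in auto)
  then have "(\<Sum>a\<in>UNIV. \<Sum>b\<in>UNIV. f a b) = (\<Sum>a\<in>UNIV. \<Sum>b\<in>{i, j, k}. f a b)"
    by simp
  also have "\<dots> = (\<Sum>a\<in>{i, j, k}. \<Sum>b\<in>{i, j, k}. f a b)"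
    by (rule sum.mono_neutral_right) (use assms in auto)
  finally show ?thesis .
qed

lemma kahan_defect_triangle_sums:
  assumes supp: "\<And>l. l \<notin> {i, j, k} \<Longrightarrow> x l = 0" and "p \<in> {i, j, k}" and "q \<in> {i, j, k}"
  shows "kahan_defect A x \<rho> p q
    = (\<Sum>a\<in>{i, j, k}. \<Sum>b\<in>{i, j, k}. kahan_R_scaled A x \<rho> p a * A a b * kahan_R_scaled A x \<rho> q b)
    - (\<Sum>c\<in>{i, j, k}. \<Sum>d\<in>{i, j, k}. (kahan_N A x p c * \<rho> c) * A c d * (kahan_N A x q d * \<rho> d))"
proof -
  have "kahan_R_scaled A x \<rho> p' a = 0" "kahan_N A x p' a = 0"
    if "p' \<in> {i, j, k}" "a \<notin> {i, j, k}" for p' a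
    using that supp by (auto simp: kahan_R_scaled_def kahan_N_def)
  with assms(2,3) show ?thesis
    unfolding kahan_defect_def by (subst (1 2) double_sum_triangle) auto
qed

text \<open>The last condition makes the Kahan equations force \<open>y\<^sub>m = 0\<close> off the triangle.\<close>

definition triangle_domain :: "('n \<Rightarrow> 'a) \<Rightarrow> bool" where
  "triangle_domain x \<longleftrightarrow> (\<forall>l. x l \<noteq> 0 \<longleftrightarrow> l \<in> {i, j, k}) \<and> det3 (kahan_N A x) i j k \<noteq> 0
     \<and> (\<forall>m. m \<notin> {i, j, k} \<longrightarrow> (\<Sum>l\<in>UNIV. A m l * x l) \<noteq> 1)"

definition triangle_ratio :: "('n \<Rightarrow> 'a) \<Rightarrow> 'n \<Rightarrow> 'a" where
  "triangle_ratio x l =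
     det3 (\<lambda>p m. if m = l then 1 else kahan_N A x p m) i j k / det3 (kahan_N A x) i j k"

lemma triangle_ratio_cramer:
  assumes det: "det3 (kahan_N A x) i j k \<noteq> 0" and supp: "\<And>l. l \<notin> {i, j, k} \<Longrightarrow> x l = 0"
  shows "(\<forall>p\<in>{i, j, k}. (\<Sum>l\<in>UNIV. kahan_N A x p l * \<rho> l) = 1)
     \<longleftrightarrow> (\<forall>l\<in>{i, j, k}. \<rho> l = triangle_ratio x l)"
proof -
  have "(\<Sum>l\<in>UNIV. kahan_N A x p l * \<rho> l)
      = kahan_N A x p i * \<rho> i + kahan_N A x p j * \<rho> j + kahan_N A x p k * \<rho> k"
    if "p \<in> {i, j, k}" for p
    by (rule sum_triangle) (use that supp in \<open>auto simp: kahan_N_def\<close>)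
  then show ?thesis
    using cramer3[OF distinct det, of \<rho> "\<lambda>_. 1"] unfolding triangle_ratio_def by simp
qed

lemma kahan_eqs_triangle_iff:
  assumes "triangle_domain x"
  shows "kahan_eqs A x y \<longleftrightarrow> y = (\<lambda>l. x l * triangle_ratio x l)"
proof -
  from assms have supp: "x l \<noteq> 0 \<longleftrightarrow> l \<in> {i, j, k}" for l
    by (simp add: triangle_domain_def)
  from assms have det: "det3 (kahan_N A x) i j k \<noteq> 0"
    by (simp add: triangle_domain_def)
  from assms have outside: "(\<Sum>l\<in>UNIV. A m l * x l) \<noteq> 1" if "m \<notin> {i, j, k}" for m
    using that by (simp add: triangle_domain_def)
  have "kahan_eqs A x (\<lambda>l. x l * \<rho> l) \<longleftrightarrow> (\<forall>p\<in>{i, j, k}. (\<Sum>l\<in>UNIV. kahan_N A x p l * \<rho> l) = 1)" for \<rho>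
    unfolding kahan_eqs_scaled_iff supp by blast
  then have scaled: "kahan_eqs A x (\<lambda>l. x l * \<rho> l) \<longleftrightarrow> (\<forall>l\<in>{i, j, k}. \<rho> l = triangle_ratio x l)" for \<rho>
    using triangle_ratio_cramer[OF det] supp by blast
  show ?thesis
  proof
    assume eqs: "kahan_eqs A x y"
    define \<rho> where "\<rho> l = y l / x l" for l
    have y_\<rho>: "y = (\<lambda>l. x l * \<rho> l)"
    proof
      fix l
      show "y l = x l * \<rho> l"
        using kahan_eqs_imp_zero[OF eqs _ outside, of l] supp[of l] unfolding \<rho>_def
        by (cases "l \<in> {i, j, k}") auto
    qed
    with eqs have \<rho>: "\<forall>l\<in>{i, j, k}. \<rho> l = triangle_ratio x l"
      using scaled by simp
    show "y = (\<lambda>l. x l * triangle_ratio x l)"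
    proof
      fix l
      show "y l = x l * triangle_ratio x l"
        using \<rho> supp[of l] unfolding y_\<rho> by (cases "l \<in> {i, j, k}") auto
    qed
  next
    assume "y = (\<lambda>l. x l * triangle_ratio x l)"
    then show "kahan_eqs A x y" using scaled by blast
  qed
qed

lemma kahan_defined_triangle:
  assumes "triangle_domain x"
  shows "kahan_defined A x"
  unfolding kahan_defined_def kahan_eqs_triangle_iff[OF assms] by simp

lemma kahan_eq_triangle_ratio: "triangle_domain x \<Longrightarrow> kahan A x = (\<lambda>l. x l * triangle_ratio x l)"
  unfolding kahan_def by (rule the_equality) (simp_all add: kahan_eqs_triangle_iff)

lemma field_differentiable_triangle_ratio:
  assumes "\<And>m. (\<lambda>s. X s m) field_differentiable at s0" and "det3 (kahan_N A (X s0)) i j k \<noteq> 0"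
  shows "(\<lambda>s. triangle_ratio (X s) l) field_differentiable at s0"
proof -
  have "(\<lambda>s. if m = l then 1 else kahan_N A (X s) p m) field_differentiable at s0" for p m
    by (cases "m = l") (simp_all add: field_differentiable_kahan_N assms)
  then show ?thesis
    unfolding triangle_ratio_def
    by (intro field_differentiable_divide field_differentiable_det3 field_differentiable_kahan_N assms)
qed

lemma triangle_domain_nhds:
  assumes dom: "triangle_domain x" and q: "q \<in> {i, j, k}"
  shows "\<forall>\<^sub>F t in nhds (x q). triangle_domain (x(q := t))"
proof -
  have component: "(\<lambda>t. (x(q := t)) m) field_differentiable at (x q)" for m
    by (rule field_differentiable_fun_upd_component)
  have "\<forall>\<^sub>F t in nhds (x q). t \<noteq> 0"
    using dom q by (intro isCont_eventually_nhds_neq) (auto simp: triangle_domain_def)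
  moreover have "\<forall>\<^sub>F t in nhds (x q). det3 (kahan_N A (x(q := t))) i j k \<noteq> 0"
    using dom
    by (intro isCont_eventually_nhds_neq field_differentiable_imp_continuous_at
        field_differentiable_det3 field_differentiable_kahan_N component) (simp add: triangle_domain_def)
  moreover have "\<forall>\<^sub>F t in nhds (x q). \<forall>m. m \<notin> {i, j, k} \<longrightarrow> (\<Sum>l\<in>UNIV. A m l * (x(q := t)) l) \<noteq> 1"
  proof (rule eventually_all_finite, cases)
    fix m
    assume "m \<notin> {i, j, k}"
    then have "\<forall>\<^sub>F t in nhds (x q). (\<Sum>l\<in>UNIV. A m l * (x(q := t)) l) \<noteq> 1"
      using dom
      by (intro isCont_eventually_nhds_neq field_differentiable_imp_continuous_at
          derivative_intros component) (simp add: triangle_domain_def)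
    then show "\<forall>\<^sub>F t in nhds (x q). m \<notin> {i, j, k} \<longrightarrow> (\<Sum>l\<in>UNIV. A m l * (x(q := t)) l) \<noteq> 1"
      by (simp add: eventually_mono)
  qed simp
  ultimately show ?thesis
    by eventually_elim (use dom q in \<open>auto simp: triangle_domain_def\<close>)
qed

lemma field_differentiable_kahan_triangle:
  assumes dom: "triangle_domain x" and q: "q \<in> {i, j, k}"
  shows "(\<lambda>t. kahan A (x(q := t)) l) field_differentiable at (x q)"
proof (rule field_differentiable_eventually_eq)
  show "\<forall>\<^sub>F t in nhds (x q). (x(q := t)) l * triangle_ratio (x(q := t)) l = kahan A (x(q := t)) l"
    using triangle_domain_nhds[OF dom q] by (rule eventually_mono) (simp add: kahan_eq_triangle_ratio)
  show "(\<lambda>t. (x(q := t)) l * triangle_ratio (x(q := t)) l) field_differentiable at (x q)"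
    using dom
    by (intro field_differentiable_mult field_differentiable_triangle_ratio
        field_differentiable_fun_upd_component)
      (simp_all add: triangle_domain_def)
qed

lemma kahan_poisson_defect_zero:
  assumes KP: "kahan_poisson A" and dom: "triangle_domain x" and "p \<in> {i, j, k}" and "q \<in> {i, j, k}"
  shows "kahan_defect A x (triangle_ratio x) p q = 0"
proof -
  have supp: "x l \<noteq> 0 \<longleftrightarrow> l \<in> {i, j, k}" for l
    using dom by (simp add: triangle_domain_def)
  have nearby: "\<forall>\<^sub>F t in nhds (x q'). kahan_defined A (x(q' := t))" if "x q' \<noteq> 0" for q'
    using triangle_domain_nhds[OF dom] that supp by (blast intro: eventually_mono kahan_defined_triangle)
  have diff: "(\<lambda>t. kahan A (x(q' := t)) l) field_differentiable at (x q')" if "x q' \<noteq> 0" for q' l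
    using field_differentiable_kahan_triangle[OF dom] that supp by blast
  have "x p * x q * kahan_defect A x (triangle_ratio x) p q = 0"
    using kahan_poisson_congruence[OF KP kahan_defined_triangle[OF dom] nearby diff, of p q]
      kahan_congruence_scaled[of A x "triangle_ratio x" p q]
    unfolding kahan_eq_triangle_ratio[OF dom] by simp
  moreover have "x p \<noteq> 0" "x q \<noteq> 0"
    using assms(3,4) supp by blast+
  ultimately show ?thesis by simp
qed

lemma triangle_ratio_apex:
  assumes "1 + A i j * t \<noteq> 0" and "1 + A i k * t \<noteq> 0"
  defines "x0 \<equiv> (\<lambda>_. 0)(i := t)"
  shows "det3 (kahan_N A x0) i j k \<noteq> 0"
    and "triangle_ratio x0 i = 1"
    and "(1 + A i j * t) * triangle_ratio x0 j = 1 - A i j * t"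
    and "(1 + A i k * t) * triangle_ratio x0 k = 1 - A i k * t"
proof -
  have sum_x0: "(\<Sum>m\<in>UNIV. A p m * x0 m) = A p i * t" for p
    unfolding x0_def by (simp add: if_distrib[of "\<lambda>u. A p _ * u"] cong: if_cong)
  have N: "kahan_N A x0 p l = (if p = l then 1 - A p i * t else 0) - A p l * x0 l" for p l
    by (simp add: kahan_N_def sum_x0)
  have skew_entries: "A j i = - A i j" "A k i = - A i k" "A i i = 0" "A j j = 0" "A k k = 0"
    using skew_symmetric_swap[OF skew] skew_symmetric_diag[OF skew] by blast+
  have x0: "x0 i = t" "x0 j = 0" "x0 k = 0"
    using distinct by (auto simp: x0_def)
  have "det3 (kahan_N A x0) i j k = (1 + A i j * t) * (1 + A i k * t)"
    using distinct unfolding det3_def N by (simp add: skew_entries x0 algebra_simps)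
  with assms(1,2) show det: "det3 (kahan_N A x0) i j k \<noteq> 0" by simp
  have "\<forall>p\<in>{i, j, k}. kahan_N A x0 p i * triangle_ratio x0 i + kahan_N A x0 p j * triangle_ratio x0 j
      + kahan_N A x0 p k * triangle_ratio x0 k = 1"
    using cramer3[OF distinct det, of "triangle_ratio x0" "\<lambda>_. 1"] unfolding triangle_ratio_def by simp
  then show "triangle_ratio x0 i = 1" "(1 + A i j * t) * triangle_ratio x0 j = 1 - A i j * t"
    "(1 + A i k * t) * triangle_ratio x0 k = 1 - A i k * t"
    using distinct unfolding N by (auto simp: skew_entries x0 algebra_simps)
qed

lemma kahan_defect_apex:
  assumes "\<rho> i = 1"
    and "(1 + A i j * t) * \<rho> j = 1 - A i j * t" and "(1 + A i k * t) * \<rho> k = 1 - A i k * t"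
  defines "x0 \<equiv> (\<lambda>_. 0)(i := t)"
  shows "(1 + A i j * t) * (1 + A i k * t) * kahan_defect A x0 \<rho> j k
       = 2 * A i j * A i k * ((A i k)\<^sup>2 - (A i j)\<^sup>2) * t ^ 3"
proof -
  have sum_x0: "(\<Sum>m\<in>UNIV. A p m * (x0 m * \<rho> m)) = A p i * t * \<rho> i"
    "(\<Sum>m\<in>UNIV. A p m * x0 m) = A p i * t" for p
    unfolding x0_def
    by (simp_all add: if_distrib[of "\<lambda>u. A p _ * (u * _)"] if_distrib[of "\<lambda>u. A p _ * u"] cong: if_cong)
  have skew_entries: "A j i = - A i j" "A k i = - A i k" "A k j = - A j k"
    "A i i = 0" "A j j = 0" "A k k = 0"
    using skew_symmetric_swap[OF skew] skew_symmetric_diag[OF skew] by blast+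
  have x0: "x0 i = t" "x0 j = 0" "x0 k = 0" "l \<notin> {i, j, k} \<Longrightarrow> x0 l = 0" for l
    using distinct by (auto simp: x0_def)
  have expansion: "kahan_defect A x0 \<rho> j k
    = (\<Sum>a\<in>{i, j, k}. \<Sum>b\<in>{i, j, k}. kahan_R_scaled A x0 \<rho> j a * A a b * kahan_R_scaled A x0 \<rho> k b)
    - (\<Sum>c\<in>{i, j, k}. \<Sum>d\<in>{i, j, k}. (kahan_N A x0 j c * \<rho> c) * A c d * (kahan_N A x0 k d * \<rho> d))"
    by (rule kahan_defect_triangle_sums) (use x0 in auto)
  show ?thesis
    unfolding expansion kahan_R_scaled_def kahan_N_def sum_x0
    using assms(1-3) by (simp add: distinct_vertices x0 skew_entries) algebra
qed

definition apex_curve :: "'a \<Rightarrow> 'a \<Rightarrow> 'n \<Rightarrow> 'a" where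
  "apex_curve t s = (\<lambda>_. 0)(i := t, j := s, k := s)"

lemma apex_curve_0: "apex_curve t 0 = (\<lambda>_. 0)(i := t)"
  using distinct by (auto simp: apex_curve_def)

lemma field_differentiable_apex_curve: "(\<lambda>s. apex_curve t s m) field_differentiable at s0"
  unfolding apex_curve_def by (cases "m = k"; cases "m = j") simp_all

lemma triangle_domain_apex_curve:
  assumes "t \<noteq> 0" and "\<And>m. A m i * t \<noteq> 1" and "det3 (kahan_N A ((\<lambda>_. 0)(i := t))) i j k \<noteq> 0"
  shows "\<forall>\<^sub>F s in at 0. triangle_domain (apex_curve t s)"
proof -
  have "\<forall>\<^sub>F s in nhds 0. det3 (kahan_N A (apex_curve t s)) i j k \<noteq> 0"
    using assms(3)
    by (intro isCont_eventually_nhds_neq field_differentiable_imp_continuous_at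
        field_differentiable_det3 field_differentiable_kahan_N field_differentiable_apex_curve)
      (simp add: apex_curve_0)
  moreover have "\<forall>\<^sub>F s in nhds 0. \<forall>m. m \<notin> {i, j, k} \<longrightarrow> (\<Sum>l\<in>UNIV. A m l * apex_curve t s l) \<noteq> 1"
  proof (rule eventually_all_finite, cases)
    fix m
    assume "m \<notin> {i, j, k}"
    have "(\<Sum>l\<in>UNIV. A m l * apex_curve t 0 l) = A m i * t"
      unfolding apex_curve_0 by (simp add: if_distrib[of "\<lambda>u. A m _ * u"] cong: if_cong)
    then have "\<forall>\<^sub>F s in nhds 0. (\<Sum>l\<in>UNIV. A m l * apex_curve t s l) \<noteq> 1"
      using assms(2)
      by (intro isCont_eventually_nhds_neq field_differentiable_imp_continuous_at
          derivative_intros field_differentiable_apex_curve) simp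
    then show "\<forall>\<^sub>F s in nhds 0. m \<notin> {i, j, k} \<longrightarrow> (\<Sum>l\<in>UNIV. A m l * apex_curve t s l) \<noteq> 1"
      by (simp add: eventually_mono)
  qed simp
  ultimately have "\<forall>\<^sub>F s in at 0. s \<noteq> 0 \<and> det3 (kahan_N A (apex_curve t s)) i j k \<noteq> 0
      \<and> (\<forall>m. m \<notin> {i, j, k} \<longrightarrow> (\<Sum>l\<in>UNIV. A m l * apex_curve t s l) \<noteq> 1)"
    unfolding eventually_at_filter by eventually_elim simp
  then show ?thesis
    by eventually_elim (use assms(1) distinct in \<open>auto simp: triangle_domain_def apex_curve_def\<close>)
qed

text \<open>The defect vanishes along the apex curve \<open>s \<mapsto> (t, s, s)\<close>; since the factor
  \<open>x\<^sub>j x\<^sub>k = s\<^sup>2\<close> has been divided out, it still vanishes in the limit at the apex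
  point \<open>(t, 0, 0)\<close>.\<close>

lemma kahan_poisson_defect_apex:
  assumes KP: "kahan_poisson A" and "t \<noteq> 0" and "\<And>m. A m i * t \<noteq> 1"
    and det: "det3 (kahan_N A ((\<lambda>_. 0)(i := t))) i j k \<noteq> 0"
  shows "kahan_defect A ((\<lambda>_. 0)(i := t)) (triangle_ratio ((\<lambda>_. 0)(i := t))) j k = 0"
proof -
  let ?defect = "\<lambda>s. kahan_defect A (apex_curve t s) (triangle_ratio (apex_curve t s)) j k"
  have "\<forall>\<^sub>F s in at 0. ?defect s = 0"
    using triangle_domain_apex_curve[OF assms(2-4)]
    by (rule eventually_mono) (simp add: kahan_poisson_defect_zero[OF KP])
  then have "?defect \<midarrow>0\<rightarrow> 0"
    by (rule tendsto_eventually)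
  moreover have "isCont ?defect 0"
    using det
    by (intro field_differentiable_imp_continuous_at field_differentiable_kahan_defect
        field_differentiable_apex_curve field_differentiable_triangle_ratio) (simp add: apex_curve_0)
  ultimately show ?thesis
    unfolding isCont_def apex_curve_0 by (rule LIM_unique[rotated])
qed

lemma kahan_poisson_triangle:
  assumes KP: "kahan_poisson A"
  shows "A i j * A i k * ((A i k)\<^sup>2 - (A i j)\<^sup>2) = 0"
proof -
  obtain t :: 'a where "t \<notin> insert 0 (range (\<lambda>m. inverse (A m i)))"
    using ex_new_if_finite[OF infinite_UNIV_char_0, of "insert 0 (range (\<lambda>m. inverse (A m i)))"] by auto
  then have t: "t \<noteq> 0" "\<And>m. A m i * t \<noteq> 1"
    by (auto dest: inverse_unique)
  have apex: "1 + A i j * t \<noteq> 0" "1 + A i k * t \<noteq> 0"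
    using t(2)[of j] t(2)[of k]
      skew_symmetric_swap[OF skew, of j i] skew_symmetric_swap[OF skew, of k i]
    by (auto simp: add_eq_0_iff)
  have "(1 + A i j * t) * (1 + A i k * t)
      * kahan_defect A ((\<lambda>_. 0)(i := t)) (triangle_ratio ((\<lambda>_. 0)(i := t))) j k
      = 2 * A i j * A i k * ((A i k)\<^sup>2 - (A i j)\<^sup>2) * t ^ 3"
    by (intro kahan_defect_apex triangle_ratio_apex apex)
  then show ?thesis
    using kahan_poisson_defect_apex[OF KP t triangle_ratio_apex(1)[OF apex]] t(1) by simp
qed

end

section \<open>From triangles to the whole graph\<close>

lemma kahan_poisson_adjacent_weights:
  fixes A :: "'n::finite \<Rightarrow> 'n \<Rightarrow> 'a::real_normed_field"
  assumes skew: "skew_symmetric A" and KP: "kahan_poisson A"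
    and ij: "A i j \<noteq> 0" and ik: "A i k \<noteq> 0"
  shows "(A i j)\<^sup>2 = (A i k)\<^sup>2"
proof (cases "j = k")
  case False
  with ij ik skew_symmetric_diag[OF skew] have "distinct [i, j, k]"
    by auto
  with skew interpret kahan_triangle A i j k
    by unfold_locales
  show ?thesis
    using kahan_poisson_triangle[OF KP] ij ik by simp
qed simp

lemma connected_graph_uniform_weights:
  fixes A :: "'n \<Rightarrow> 'n \<Rightarrow> 'a::real_normed_field"
  assumes skew: "skew_symmetric A" and connected: "connected_graph A"
    and adjacent: "\<And>i j k. A i j \<noteq> 0 \<Longrightarrow> A i k \<noteq> 0 \<Longrightarrow> (A i j)\<^sup>2 = (A i k)\<^sup>2"
  shows "\<exists>\<gamma>. \<gamma> \<noteq> 0 \<and> (\<forall>i j. A i j \<noteq> 0 \<longrightarrow> A i j = \<gamma> \<or> A i j = - \<gamma>)"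
proof (cases "\<forall>u v. A u v = 0")
  case True
  then show ?thesis by (intro exI[of _ 1]) auto
next
  case False
  then obtain u v where uv: "A u v \<noteq> 0" by blast
  define uniform where "uniform w \<longleftrightarrow> (\<forall>z. A w z \<noteq> 0 \<longrightarrow> (A w z)\<^sup>2 = (A u v)\<^sup>2)" for w
  have uniform_step: "uniform w'" if "uniform w" and "(w, w') \<in> arcs A \<union> (arcs A)\<inverse>" for w w'
  proof -
    have swap: "A w' w = - A w w'"
      using skew_symmetric_swap[OF skew] .
    with that(2) have "A w' w \<noteq> 0"
      by (auto simp: arcs_def)
    with that(1) swap adjacent[of w' w] show ?thesis
      unfolding uniform_def by (metis power2_minus neg_equal_0_iff_equal)
  qed
  have "uniform w" for w
  proof -
    have "(u, w) \<in> (arcs A \<union> (arcs A)\<inverse>)\<^sup>*"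
      using connected unfolding connected_graph_def by blast
    then show ?thesis
    proof (induction rule: rtrancl_induct)
      case base
      show ?case unfolding uniform_def using adjacent[OF uv] by metis
    next
      case (step w w')
      then show ?case using uniform_step by blast
    qed
  qed
  then show ?thesis
    using uv unfolding uniform_def by (metis power2_eq_iff)
qed

theorem mainTheorem7:
  fixes A :: "'n::finite \<Rightarrow> 'n \<Rightarrow> 'a::real_normed_field"
  assumes "skew_symmetric A"
    and "connected_graph A"
    and "kahan_poisson A"
  shows "\<exists>\<gamma>. \<gamma> \<noteq> 0 \<and> (\<forall>i j. A i j \<noteq> 0 \<longrightarrow> A i j = \<gamma> \<or> A i j = - \<gamma>)"
  using connected_graph_uniform_weights[OF assms(1,2) kahan_poisson_adjacent_weights[OF assms(1,3)]] .

end
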